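(* Let $u:V\to[0,1]$ and suppose $q^*\in\arg\max_{\|q\|_\infty\le1}\sum_{x\in V}u(x)(\mathrm{div}_wq)(x)$. For $\alpha\in(0,1]$ define $u^\alpha(x)=1$ if $u(x)\ge\alpha$ and $u^\alpha(x)=0$ otherwise. Then for almost every threshold level $\alpha\in(0,1]$, $q^*$ also satisfies $q^*\in\arg\max_{\|q\|_\infty\le1}\sum_{x\in V}u^\alpha(x)(\mathrm{div}_wq)(x)$.
   Context: Let $G=(V,E)$ be a finite undirected graph with symmetric weights $w(x,y)=w(y,x)>0$ for $\{x,y\}\in E$ and $w(x,y)=0$ otherwise. For $q:V\times V\to\mathbb{R}$, $(\mathrm{div}_wq)(x)=\frac12\sum_{y\in V}w(x,y)(q(x,y)-q(y,x))$ and $\|q\|_\infty=\max_{x,y\in V}|q(x,y)|$; the maximization is over all $q:V\times V\to\mathbb{R}$ with $\|q\|_\infty\le1$. *)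

theory Defs
  imports "HOL-Analysis.Analysis"
begin

definition div_w :: "('a::finite \<Rightarrow> 'a \<Rightarrow> real) \<Rightarrow> ('a \<Rightarrow> 'a \<Rightarrow> real) \<Rightarrow> 'a \<Rightarrow> real" where
  "div_w w q x = (1/2) * (\<Sum>y\<in>UNIV. w x y * (q x y - q y x))"

definition sup_norm :: "('a::finite \<Rightarrow> 'a \<Rightarrow> real) \<Rightarrow> real" where
  "sup_norm q = Max {\<bar>q x y\<bar> | x y. True}"

definition tv_objective :: "('a::finite \<Rightarrow> real) \<Rightarrow> ('a \<Rightarrow> 'a \<Rightarrow> real) \<Rightarrow> ('a \<Rightarrow> 'a \<Rightarrow> real) \<Rightarrow> real" where
  "tv_objective u w q = (\<Sum>x\<in>UNIV. u x * div_w w q x)"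

definition is_argmax :: "('a::finite \<Rightarrow> real) \<Rightarrow> ('a \<Rightarrow> 'a \<Rightarrow> real) \<Rightarrow> ('a \<Rightarrow> 'a \<Rightarrow> real) \<Rightarrow> bool" where
  "is_argmax u w q \<longleftrightarrow> sup_norm q \<le> 1 \<and>
     (\<forall>p. sup_norm p \<le> 1 \<longrightarrow> tv_objective u w p \<le> tv_objective u w q)"

definition threshold :: "('a \<Rightarrow> real) \<Rightarrow> real \<Rightarrow> 'a \<Rightarrow> real" where
  "threshold u \<alpha> x = (if u x \<ge> \<alpha> then 1 else 0)"

end

theory Submission
  imports Defs
begin

text \<open>
  For symmetric nonnegative weights the objective of any q with sup-norm at most 1 is bounded by
  the graph total variation TV(v) = 1/2 * (sum over x, y of w x y * \<bar>v x - v y\<bar>), with equality for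
  q x y = sgn (v x - v y); so q is a maximizer for v exactly when it attains TV(v).
  Splitting v = min v b + (v - min v b) makes TV additive while the objective is linear, hence a
  maximizer for v attains TV on both pieces. For a level \<alpha> not taken by u, choosing b = \<alpha> and
  then b = \<alpha> - e with e the gap below \<alpha> exhibits e \<cdot> threshold u \<alpha> as such a piece. Only
  the finitely many values of u are excluded, a null set.
\<close>

definition graph_tv :: "('a::finite \<Rightarrow> 'a \<Rightarrow> real) \<Rightarrow> ('a \<Rightarrow> real) \<Rightarrow> real" where
  "graph_tv w v = (1/2) * (\<Sum>x\<in>UNIV. \<Sum>y\<in>UNIV. w x y * \<bar>v x - v y\<bar>)"

lemma tv_objective_eq_edge_sum:
  fixes w :: "'a::finite \<Rightarrow> 'a \<Rightarrow> real"
  assumes w_sym: "\<forall>x y. w x y = w y x"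
  shows "tv_objective v w p = (1/2) * (\<Sum>x\<in>UNIV. \<Sum>y\<in>UNIV. w x y * p x y * (v x - v y))"
proof -
  have "tv_objective v w p = (1/2) * ((\<Sum>x\<in>UNIV. \<Sum>y\<in>UNIV. w x y * v x * p x y)
        - (\<Sum>x\<in>UNIV. \<Sum>y\<in>UNIV. w x y * v x * p y x))"
    unfolding tv_objective_def div_w_def
    by (simp add: sum_distrib_left sum_subtractf[symmetric] algebra_simps)
  also have "(\<Sum>x\<in>UNIV. \<Sum>y\<in>UNIV. w x y * v x * p y x) = (\<Sum>x\<in>UNIV. \<Sum>y\<in>UNIV. w x y * v y * p x y)"
    by (subst sum.swap) (simp add: w_sym)
  finally show ?thesis
    by (simp add: sum_subtractf[symmetric] algebra_simps)
qed

lemma finite_abs_values: "finite {\<bar>p x y\<bar> | x y. True}" for p :: "'a::finite \<Rightarrow> 'a \<Rightarrow> real"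
proof -
  have "{\<bar>p x y\<bar> | x y. True} = (\<lambda>(x, y). \<bar>p x y\<bar>) ` UNIV" by auto
  then show ?thesis by simp
qed

lemma sup_norm_le_one_iff:
  "sup_norm p \<le> 1 \<longleftrightarrow> (\<forall>x y. \<bar>p x y\<bar> \<le> 1)" for p :: "'a::finite \<Rightarrow> 'a \<Rightarrow> real"
  unfolding sup_norm_def using finite_abs_values[of p] by (subst Max_le_iff) auto

lemma tv_objective_le_graph_tv:
  fixes w :: "'a::finite \<Rightarrow> 'a \<Rightarrow> real"
  assumes w_sym: "\<forall>x y. w x y = w y x" and w_nonneg: "\<forall>x y. w x y \<ge> 0"
    and p: "sup_norm p \<le> 1"
  shows "tv_objective v w p \<le> graph_tv w v"
proof -
  have "w x y * p x y * (v x - v y) \<le> w x y * \<bar>v x - v y\<bar>" for x y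
  proof -
    have "\<bar>p x y\<bar> \<le> 1"
      using p unfolding sup_norm_le_one_iff by blast
    then have "\<bar>p x y\<bar> * \<bar>v x - v y\<bar> \<le> \<bar>v x - v y\<bar>"
      by (simp add: mult_left_le_one_le)
    then have "p x y * (v x - v y) \<le> \<bar>v x - v y\<bar>"
      by (metis abs_ge_self abs_mult order_trans)
    then show ?thesis
      using w_nonneg by (metis mult.assoc mult_left_mono)
  qed
  then show ?thesis
    unfolding tv_objective_eq_edge_sum[OF w_sym] graph_tv_def
    by (intro mult_left_mono sum_mono) auto
qed

lemma tv_objective_sgn_eq_graph_tv:
  fixes w :: "'a::finite \<Rightarrow> 'a \<Rightarrow> real"
  assumes w_sym: "\<forall>x y. w x y = w y x"
  shows "tv_objective v w (\<lambda>x y. sgn (v x - v y)) = graph_tv w v"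
proof -
  have "sgn t * t = \<bar>t\<bar>" for t :: real by (simp add: abs_if sgn_if)
  then show ?thesis
    unfolding tv_objective_eq_edge_sum[OF w_sym] graph_tv_def by (simp add: mult.assoc)
qed

lemma is_argmax_iff_attains_graph_tv:
  fixes w :: "'a::finite \<Rightarrow> 'a \<Rightarrow> real"
  assumes w_sym: "\<forall>x y. w x y = w y x" and w_nonneg: "\<forall>x y. w x y \<ge> 0"
  shows "is_argmax v w q \<longleftrightarrow> sup_norm q \<le> 1 \<and> tv_objective v w q = graph_tv w v"
proof -
  have "sup_norm (\<lambda>x y. sgn (v x - v y)) \<le> 1"
    unfolding sup_norm_le_one_iff by (simp add: abs_sgn_eq)
  then show ?thesis
    unfolding is_argmax_def
    using tv_objective_le_graph_tv[OF w_sym w_nonneg] tv_objective_sgn_eq_graph_tv[OF w_sym, of v]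
    by (metis order_antisym)
qed

lemma abs_diff_split_at:
  "\<bar>s - t\<bar> = \<bar>min s b - min t b\<bar> + \<bar>(s - min s b) - (t - min t b)\<bar>" for s t b :: real
  by (auto simp: min_def abs_if)

lemma is_argmax_truncations:
  fixes w :: "'a::finite \<Rightarrow> 'a \<Rightarrow> real"
  assumes w_sym: "\<forall>x y. w x y = w y x" and w_nonneg: "\<forall>x y. w x y \<ge> 0"
    and q_max: "is_argmax v w q"
  shows "is_argmax (\<lambda>x. min (v x) b) w q" "is_argmax (\<lambda>x. v x - min (v x) b) w q"
proof -
  let ?lo = "\<lambda>x. min (v x) b" and ?hi = "\<lambda>x. v x - min (v x) b"
  have tv_split: "graph_tv w v = graph_tv w ?lo + graph_tv w ?hi"
    unfolding graph_tv_def by (subst abs_diff_split_at[of _ _ b]) (simp add: distrib_left sum.distrib)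
  have obj_split: "tv_objective v w q = tv_objective ?lo w q + tv_objective ?hi w q"
    unfolding tv_objective_def by (simp add: sum.distrib[symmetric] algebra_simps)
  have q: "sup_norm q \<le> 1" "tv_objective v w q = graph_tv w v"
    using q_max is_argmax_iff_attains_graph_tv[OF w_sym w_nonneg] by auto
  have "tv_objective ?lo w q \<le> graph_tv w ?lo" "tv_objective ?hi w q \<le> graph_tv w ?hi"
    using tv_objective_le_graph_tv[OF w_sym w_nonneg q(1)] by auto
  then have "tv_objective ?lo w q = graph_tv w ?lo" "tv_objective ?hi w q = graph_tv w ?hi"
    using tv_split obj_split q(2) by linarith+
  then show "is_argmax ?lo w q" "is_argmax ?hi w q"
    using is_argmax_iff_attains_graph_tv[OF w_sym w_nonneg] q(1) by auto
qed

lemma is_argmax_scale_pos: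
  fixes w :: "'a::finite \<Rightarrow> 'a \<Rightarrow> real"
  assumes w_sym: "\<forall>x y. w x y = w y x" and w_nonneg: "\<forall>x y. w x y \<ge> 0"
    and q_max: "is_argmax (\<lambda>x. c * v x) w q" and c: "c > 0"
  shows "is_argmax v w q"
proof -
  have obj: "tv_objective (\<lambda>x. c * v x) w q = c * tv_objective v w q"
    unfolding tv_objective_def by (simp add: sum_distrib_left algebra_simps)
  have "\<bar>c * v x - c * v y\<bar> = c * \<bar>v x - v y\<bar>" for x y
    using c by (simp add: right_diff_distrib[symmetric] abs_mult)
  then have tv: "graph_tv w (\<lambda>x. c * v x) = c * graph_tv w v"
    unfolding graph_tv_def by (simp add: sum_distrib_left algebra_simps)
  show ?thesis
    using q_max c obj tv is_argmax_iff_attains_graph_tv[OF w_sym w_nonneg] by auto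
qed

lemma gap_below_level:
  fixes u :: "'a::finite \<Rightarrow> real" and \<alpha> :: real
  obtains e where "e > 0" "\<And>x. u x < \<alpha> \<Longrightarrow> u x \<le> \<alpha> - e"
proof -
  define S where "S = {u x | x. u x < \<alpha>}"
  have "finite S"
    unfolding S_def by (rule finite_subset[of _ "range u"]) auto
  show ?thesis
  proof (cases "S = {}")
    case True
    then show ?thesis using that[of 1] unfolding S_def by auto
  next
    case False
    have "Max S < \<alpha>" using Max_in[OF \<open>finite S\<close> False] unfolding S_def by auto
    moreover have "u x \<le> Max S" if "u x < \<alpha>" for x
      using Max_ge[OF \<open>finite S\<close>, of "u x"] that unfolding S_def by blast
    ultimately show ?thesis using that[of "\<alpha> - Max S"] by force
  qed
qed

lemma is_argmax_threshold_off_range: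
  fixes w :: "'a::finite \<Rightarrow> 'a \<Rightarrow> real"
  assumes w_sym: "\<forall>x y. w x y = w y x" and w_nonneg: "\<forall>x y. w x y \<ge> 0"
    and q_max: "is_argmax u w q" and \<alpha>: "\<alpha> \<notin> range u"
  shows "is_argmax (threshold u \<alpha>) w q"
proof -
  obtain e where e: "e > 0" and gap: "\<And>x. u x < \<alpha> \<Longrightarrow> u x \<le> \<alpha> - e"
    using gap_below_level[of u \<alpha>] by blast
  let ?lo = "\<lambda>x. min (u x) \<alpha>"
  have "is_argmax (\<lambda>x. ?lo x - min (?lo x) (\<alpha> - e)) w q"
    by (intro is_argmax_truncations(2)[OF w_sym w_nonneg] is_argmax_truncations(1)[OF w_sym w_nonneg q_max])
  moreover have "?lo x - min (?lo x) (\<alpha> - e) = e * threshold u \<alpha> x" for x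
    using e gap[of x] \<alpha> by (cases "u x \<ge> \<alpha>") (auto simp: threshold_def min_def)
  ultimately have "is_argmax (\<lambda>x. e * threshold u \<alpha> x) w q"
    by simp
  then show ?thesis
    using is_argmax_scale_pos[OF w_sym w_nonneg _ e] by blast
qed

theorem lemma1:
  fixes E :: "('a::finite \<times> 'a) set"
    and w :: "'a \<Rightarrow> 'a \<Rightarrow> real"
    and u :: "'a \<Rightarrow> real"
    and q :: "'a \<Rightarrow> 'a \<Rightarrow> real"
  assumes E_sym: "sym E"
    and w_sym: "\<forall>x y. w x y = w y x"
    and w_pos: "\<forall>x y. (x, y) \<in> E \<longrightarrow> w x y > 0"
    and w_zero: "\<forall>x y. (x, y) \<notin> E \<longrightarrow> w x y = 0"
    and u_range: "\<forall>x. 0 \<le> u x \<and> u x \<le> 1"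
    and q_max: "is_argmax u w q"
  shows "AE \<alpha> in lborel. \<alpha> \<in> {0<..1} \<longrightarrow> is_argmax (threshold u \<alpha>) w q"
proof -
  have w_nonneg: "\<forall>x y. w x y \<ge> 0"
    using w_pos w_zero by (metis less_eq_real_def)
  have "AE \<alpha> in lborel. \<alpha> \<notin> range u"
    by (intro AE_not_in finite_imp_null_set_lborel) simp
  then show ?thesis
    by eventually_elim (simp add: is_argmax_threshold_off_range[OF w_sym w_nonneg q_max])
qed

end
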